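(* For integers $0\le a<b$ let $\Delta^{(odd)}_3([a,b))$ denote the number of odd evil integers in $[a,b)$ divisible by $3$ minus the number of odd odious integers in $[a,b)$ divisible by $3$. Then: 1) $\Delta^{(odd)}_3([0,2^n))=3^{\lfloor n/2\rfloor-1}$ for all integers $n\ge 2$. 2) For integers $n,m$: $$\Delta^{(odd)}_3([2^n,2^n+2^m))=\begin{cases}0, & n \text{ and } m \text{ even},\ 2\le m\le n-2,\\ 3^{\frac{m-2}{2}}, & n \text{ odd},\ m \text{ even},\ 2\le m\le n-1,\\ -3^{\frac{m-3}{2}}, & n \text{ even},\ m \text{ odd},\ 3\le m\le n-1,\\ 2\cdot 3^{\frac{m-3}{2}}, & n \text{ and } m \text{ odd},\ 3\le m\le n-2.\end{cases}$$ 3) For integers $n,m$: $$\Delta^{(odd)}_3([2^n+2^{n-2},\,2^n+2^{n-2}+2^m))=\begin{cases}-3^{\frac{m-2}{2}}, & n \text{ and } m \text{ even},\ 2\le m\le n-4,\\ 0, & n \text{ odd},\ m \text{ even},\ 2\le m\le n-3,\\ -2\cdot 3^{\frac{m-3}{2}}, & n \text{ even},\ m \text{ odd},\ 3\le m\le n-3,\\ 3^{\frac{m-3}{2}}, & n \text{ and } m \text{ odd},\ 3\le m\le n-4.\end{cases}$$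
   Context: A nonnegative integer is called evil if its binary expansion contains an even number of 1's, and odious if it contains an odd number of 1's; in particular $0$ is evil. An interval $[a,b)$ means the set of integers $x$ with $a\le x<b$. *)

theory Defs
  imports Main
begin

fun ones :: "nat \<Rightarrow> nat" where
  "ones n = (if n = 0 then 0 else n mod 2 + ones (n div 2))"

declare ones.simps[simp del]

definition evil :: "nat \<Rightarrow> bool" where
  "evil x \<longleftrightarrow> even (ones x)"

definition odious :: "nat \<Rightarrow> bool" where
  "odious x \<longleftrightarrow> odd (ones x)"

definition delta_odd3 :: "nat \<Rightarrow> nat \<Rightarrow> int" where
  "delta_odd3 a b =
     int (card {x \<in> {a..<b}. odd x \<and> 3 dvd x \<and> evil x})
   - int (card {x \<in> {a..<b}. odd x \<and> 3 dvd x \<and> odious x})"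

end

theory Submission
  imports Defs "HOL-Number_Theory.Cong"
begin

text \<open>Write \<open>x \<in> [c 2\<^sup>m, c 2\<^sup>m + 2\<^sup>m)\<close> as \<open>x = c 2\<^sup>m + y\<close> with \<open>y < 2\<^sup>m\<close>. The binary digits of \<open>c\<close> and \<open>y\<close>
  do not interact, so \<open>(-1)^ones x = (-1)^ones c (-1)^ones y\<close>, and for \<open>m \<ge> 1\<close> the parity of \<open>x\<close> is that
  of \<open>y\<close>. Hence the signed count over such a block is \<open>\<plusminus>D\<^sub>m(r)\<close> (\<open>delta_odd_res m r\<close>), the signed count of odd \<open>y < 2\<^sup>m\<close> in
  a residue class \<open>r\<close> mod 3 shifted by \<open>c 2\<^sup>m\<close>. Splitting \<open>[0, 2\<^sup>m\<^sup>+\<^sup>1)\<close> into two such blocks gives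
  \<open>D\<^sub>m\<^sub>+\<^sub>1(2\<^sup>m + s) = D\<^sub>m(2\<^sup>m + s) - D\<^sub>m(s)\<close>; as \<open>2\<^sup>m mod 3\<close> alternates between 1 and 2 this
  recursion has a closed form of period two in \<open>m\<close>. The three ranges of the theorem are single
  blocks with \<open>c = 0\<close>, \<open>c = 2\<^sup>n\<^sup>-\<^sup>m\<close> and \<open>c = 5 \<cdot> 2\<^sup>n\<^sup>-\<^sup>2\<^sup>-\<^sup>m\<close>.\<close>

lemma ones_eq: "ones x = x mod 2 + ones (x div 2)"
  by (cases "x = 0") (simp_all add: ones.simps[of x] ones.simps[of 0])

lemma ones_0 [simp]: "ones 0 = 0"
  by (simp add: ones.simps)

lemma ones_mult_pow2_add: "y < 2 ^ m \<Longrightarrow> ones (c * 2 ^ m + y) = ones c + ones y"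
proof (induction m arbitrary: y)
  case 0
  then show ?case by simp
next
  case (Suc m)
  have double: "c * 2 ^ Suc m + y = 2 * (c * 2 ^ m) + y" by simp
  have "(c * 2 ^ Suc m + y) mod 2 = y mod 2"
    and "(c * 2 ^ Suc m + y) div 2 = c * 2 ^ m + y div 2"
    unfolding double by simp_all
  moreover have "ones (c * 2 ^ m + y div 2) = ones c + ones (y div 2)"
    using Suc by simp
  ultimately show ?case
    using ones_eq[of "c * 2 ^ Suc m + y"] ones_eq[of y] by simp
qed

lemma ones_pow2: "ones (2 ^ m) = 1"
  using ones_mult_pow2_add[of 0 m 1] ones_eq[of 1] by simp

lemma ones_5_mult_pow2: "ones (5 * 2 ^ m) = 2"
  using ones_mult_pow2_add[of 0 m 5] ones_eq[of 5] ones_eq[of 2] ones_eq[of 1] by simp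

lemma pow2_mod_3: "(2::nat) ^ m mod 3 = (if even m then 1 else 2)"
proof (induction m)
  case 0
  then show ?case by simp
next
  case (Suc m)
  have "(2::nat) ^ Suc m mod 3 = 2 * (2 ^ m mod 3) mod 3"
    by (simp add: mod_mult_right_eq)
  with Suc show ?case by auto
qed

definition odd_res_sign :: "nat \<Rightarrow> nat \<Rightarrow> int" where
  "odd_res_sign r x = (if odd x \<and> [x = r] (mod 3) then (-1) ^ ones x else 0)"

definition delta_odd_res :: "nat \<Rightarrow> nat \<Rightarrow> int" where
  "delta_odd_res m r = (\<Sum>y<2 ^ m. odd_res_sign r y)"

lemma odd_res_sign_cong: "[r = r'] (mod 3) \<Longrightarrow> odd_res_sign r = odd_res_sign r'"
  unfolding odd_res_sign_def cong_def by simp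

lemma delta_odd_res_cong: "[r = r'] (mod 3) \<Longrightarrow> delta_odd_res m r = delta_odd_res m r'"
  unfolding delta_odd_res_def by (simp add: odd_res_sign_cong)

lemma delta_odd3_eq_sum: "delta_odd3 a b = (\<Sum>x\<in>{a..<b}. odd_res_sign 0 x)"
proof -
  have "(\<Sum>x\<in>{a..<b}. odd_res_sign 0 x)
      = (\<Sum>x\<in>{a..<b}. (if odd x \<and> 3 dvd x \<and> evil x then 1 else 0)
                     - (if odd x \<and> 3 dvd x \<and> odious x then 1 else 0))"
    by (rule sum.cong) (auto simp: odd_res_sign_def cong_0_iff evil_def odious_def)
  then show ?thesis
    unfolding delta_odd3_def by (simp add: sum_subtractf sum.If_cases Int_def)
qed

lemma odd_res_sign_shift:
  assumes "1 \<le> m" "y < 2 ^ m"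
  shows "odd_res_sign (c * 2 ^ m + s) (c * 2 ^ m + y) = (-1) ^ ones c * odd_res_sign s y"
proof -
  have "even (c * 2 ^ m)"
    using assms(1) by (cases m) auto
  then have "odd (c * 2 ^ m + y) \<longleftrightarrow> odd y" by simp
  then show ?thesis
    unfolding odd_res_sign_def cong_add_lcancel_nat ones_mult_pow2_add[OF assms(2)]
    by (simp add: power_add)
qed

lemma sum_odd_res_sign_block:
  assumes "1 \<le> m"
  shows "(\<Sum>x\<in>{c * 2 ^ m..<c * 2 ^ m + 2 ^ m}. odd_res_sign (c * 2 ^ m + s) x)
       = (-1) ^ ones c * delta_odd_res m s"
proof -
  have "(\<Sum>x\<in>{c * 2 ^ m..<c * 2 ^ m + 2 ^ m}. odd_res_sign (c * 2 ^ m + s) x)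
      = (\<Sum>y<2 ^ m. odd_res_sign (c * 2 ^ m + s) (c * 2 ^ m + y))"
    using sum.shift_bounds_nat_ivl[of _ 0 "c * 2 ^ m" "2 ^ m"]
    by (simp add: atLeast0LessThan add.commute)
  also have "\<dots> = (\<Sum>y<2 ^ m. (-1) ^ ones c * odd_res_sign s y)"
    using odd_res_sign_shift[OF assms] by simp
  finally show ?thesis
    by (simp add: delta_odd_res_def sum_distrib_left)
qed

lemma delta_odd_res_Suc:
  assumes "1 \<le> m" "[2 ^ m + s = r] (mod 3)"
  shows "delta_odd_res (Suc m) r = delta_odd_res m r - delta_odd_res m s"
proof -
  have "delta_odd_res (Suc m) r
      = delta_odd_res m r + (\<Sum>x\<in>{1 * 2 ^ m..<1 * 2 ^ m + 2 ^ m}. odd_res_sign r x)"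
    using sum.atLeastLessThan_concat[of 0 "2 ^ m" "2 ^ m + 2 ^ m" "odd_res_sign r"]
    by (simp add: delta_odd_res_def atLeast0LessThan mult_2)
  also have "(\<Sum>x\<in>{1 * 2 ^ m..<1 * 2 ^ m + 2 ^ m}. odd_res_sign r x)
           = - delta_odd_res m s"
    using sum_odd_res_sign_block[OF assms(1), of 1 s] assms(2) ones_pow2[of 0]
    by (simp add: odd_res_sign_def cong_def)
  finally show ?thesis by simp
qed

lemma delta_odd_res_Suc_even:
  assumes "1 \<le> m" "even m"
  shows "delta_odd_res (Suc m) 0 = delta_odd_res m 0 - delta_odd_res m 2"
    and "delta_odd_res (Suc m) 1 = delta_odd_res m 1 - delta_odd_res m 0"
    and "delta_odd_res (Suc m) 2 = delta_odd_res m 2 - delta_odd_res m 1"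
  using assms pow2_mod_3[of m]
  by (auto intro!: delta_odd_res_Suc simp: cong_def mod_Suc)

lemma delta_odd_res_Suc_odd:
  assumes "1 \<le> m" "odd m"
  shows "delta_odd_res (Suc m) 0 = delta_odd_res m 0 - delta_odd_res m 1"
    and "delta_odd_res (Suc m) 1 = delta_odd_res m 1 - delta_odd_res m 2"
    and "delta_odd_res (Suc m) 2 = delta_odd_res m 2 - delta_odd_res m 0"
  using assms pow2_mod_3[of m]
  by (auto intro!: delta_odd_res_Suc simp: cong_def mod_Suc)

lemma delta_odd_res_1:
  "delta_odd_res 1 0 = 0" "delta_odd_res 1 1 = -1" "delta_odd_res 1 2 = 0"
  by (simp_all add: delta_odd_res_def odd_res_sign_def numeral_2_eq_2 lessThan_Suc cong_def
      ones_eq[of "Suc 0"])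

lemma delta_odd_res_closed_form:
  "delta_odd_res (2 * k + 2) 0 = 3 ^ k \<and> delta_odd_res (2 * k + 2) 1 = - (3 ^ k)
     \<and> delta_odd_res (2 * k + 2) 2 = 0
   \<and> delta_odd_res (2 * k + 3) 0 = 3 ^ k \<and> delta_odd_res (2 * k + 3) 1 = - (2 * 3 ^ k)
     \<and> delta_odd_res (2 * k + 3) 2 = 3 ^ k"
proof (induction k)
  case 0
  have "delta_odd_res 2 0 = 1" "delta_odd_res 2 1 = -1" "delta_odd_res 2 2 = 0"
    using delta_odd_res_Suc_odd[of 1] delta_odd_res_1 by (simp_all add: numeral_2_eq_2)
  moreover have "delta_odd_res 3 0 = 1" "delta_odd_res 3 1 = -2" "delta_odd_res 3 2 = 1"
    using delta_odd_res_Suc_even[of 2] calculation by (simp_all add: numeral_3_eq_3)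
  ultimately show ?case by (simp add: numeral_2_eq_2 numeral_3_eq_3)
next
  case (Suc k)
  define m where "m = 2 * k + 3"
  have m: "1 \<le> m" "odd m" "1 \<le> Suc m" "even (Suc m)"
    by (simp_all add: m_def)
  have IH: "delta_odd_res m 0 = 3 ^ k" "delta_odd_res m 1 = - (2 * 3 ^ k)"
    "delta_odd_res m 2 = 3 ^ k"
    using Suc.IH by (simp_all add: m_def)
  have steps: "2 * Suc k + 2 = Suc m" "2 * Suc k + 3 = Suc (Suc m)"
    by (simp_all add: m_def)
  show ?case
    unfolding steps using IH delta_odd_res_Suc_odd[OF m(1,2)] delta_odd_res_Suc_even[OF m(3,4)] by simp
qed

lemma delta_odd_res_even:
  assumes "even m" "2 \<le> m"
  shows "delta_odd_res m 0 = 3 ^ ((m - 2) div 2)" "delta_odd_res m 1 = - (3 ^ ((m - 2) div 2))"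
    and "delta_odd_res m 2 = 0"
proof -
  have "m = 2 * ((m - 2) div 2) + 2"
    using assms by presburger
  then show "delta_odd_res m 0 = 3 ^ ((m - 2) div 2)" "delta_odd_res m 1 = - (3 ^ ((m - 2) div 2))"
    and "delta_odd_res m 2 = 0"
    using delta_odd_res_closed_form by metis+
qed

lemma delta_odd_res_odd:
  assumes "odd m" "3 \<le> m"
  shows "delta_odd_res m 0 = 3 ^ ((m - 3) div 2)" "delta_odd_res m 1 = - (2 * 3 ^ ((m - 3) div 2))"
    and "delta_odd_res m 2 = 3 ^ ((m - 3) div 2)"
proof -
  have "m = 2 * ((m - 3) div 2) + 3"
    using assms by presburger
  then show "delta_odd_res m 0 = 3 ^ ((m - 3) div 2)" "delta_odd_res m 1 = - (2 * 3 ^ ((m - 3) div 2))"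
    and "delta_odd_res m 2 = 3 ^ ((m - 3) div 2)"
    using delta_odd_res_closed_form by metis+
qed

lemma delta_odd3_block:
  assumes "1 \<le> m"
  shows "delta_odd3 (c * 2 ^ m) (c * 2 ^ m + 2 ^ m) = (-1) ^ ones c * delta_odd_res m (2 * (c * 2 ^ m))"
proof -
  have "odd_res_sign 0 = odd_res_sign (c * 2 ^ m + 2 * (c * 2 ^ m))"
    by (rule odd_res_sign_cong) (simp add: cong_def)
  then show ?thesis
    unfolding delta_odd3_eq_sum by (simp only: sum_odd_res_sign_block[OF assms])
qed

lemma delta_odd3_initial: "1 \<le> m \<Longrightarrow> delta_odd3 0 (2 ^ m) = delta_odd_res m 0"
  using delta_odd3_block[of m 0] by simp

lemma delta_odd3_pow2_block:
  assumes "m < n" "1 \<le> m"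
  shows "delta_odd3 (2 ^ n) (2 ^ n + 2 ^ m) = - delta_odd_res m (if even n then 2 else 1)"
proof -
  have c: "2 ^ n = 2 ^ (n - m) * (2::nat) ^ m"
    using assms(1) by (simp flip: power_add)
  have res: "[2 * 2 ^ n = (if even n then 2 else 1)] (mod (3::nat))"
    using pow2_mod_3[of "Suc n"] by (simp add: cong_def)
  show ?thesis
    using delta_odd3_block[OF assms(2), of "2 ^ (n - m)"]
    unfolding c[symmetric] delta_odd_res_cong[OF res] by (simp add: ones_pow2)
qed

lemma delta_odd3_five_block:
  assumes "m + 3 \<le> n" "1 \<le> m"
  shows "delta_odd3 (2 ^ n + 2 ^ (n - 2)) (2 ^ n + 2 ^ (n - 2) + 2 ^ m)
       = delta_odd_res m (if even n then 1 else 2)"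
proof -
  have "n - 2 + 2 = n"
    using assms(1) by simp
  then have "(2::nat) ^ n = 2 ^ (n - 2) * 2 ^ 2"
    by (metis power_add)
  then have five: "2 ^ n + 2 ^ (n - 2) = 5 * (2::nat) ^ (n - 2)"
    by simp
  have c: "5 * 2 ^ (n - 2) = 5 * 2 ^ (n - 2 - m) * (2::nat) ^ m"
    using assms(1) by (simp flip: power_add)
  have "[10 * 2 ^ (n - 2) = 1 * 2 ^ (n - 2)] (mod (3::nat))"
    by (rule cong_mult) (simp_all add: cong_def)
  then have res: "[2 * (5 * 2 ^ (n - 2)) = (if even n then 1 else 2)] (mod (3::nat))"
    using pow2_mod_3[of "n - 2"] assms(1) by (simp add: cong_def)
  show ?thesis
    using delta_odd3_block[OF assms(2), of "5 * 2 ^ (n - 2 - m)"]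
    unfolding five c[symmetric] delta_odd_res_cong[OF res] by (simp add: ones_5_mult_pow2)
qed

theorem theorem2:
  shows "(\<forall>n::nat. n \<ge> 2 \<longrightarrow> delta_odd3 0 (2^n) = 3 ^ (n div 2 - 1))
   \<and> (\<forall>n m::nat.
        (even n \<and> even m \<and> 2 \<le> m \<and> m + 2 \<le> n \<longrightarrow>
           delta_odd3 (2^n) (2^n + 2^m) = 0)
      \<and> (odd n \<and> even m \<and> 2 \<le> m \<and> m + 1 \<le> n \<longrightarrow>
           delta_odd3 (2^n) (2^n + 2^m) = 3 ^ ((m - 2) div 2))
      \<and> (even n \<and> odd m \<and> 3 \<le> m \<and> m + 1 \<le> n \<longrightarrow>
           delta_odd3 (2^n) (2^n + 2^m) = - (3 ^ ((m - 3) div 2)))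
      \<and> (odd n \<and> odd m \<and> 3 \<le> m \<and> m + 2 \<le> n \<longrightarrow>
           delta_odd3 (2^n) (2^n + 2^m) = 2 * 3 ^ ((m - 3) div 2)))
   \<and> (\<forall>n m::nat.
        (even n \<and> even m \<and> 2 \<le> m \<and> m + 4 \<le> n \<longrightarrow>
           delta_odd3 (2^n + 2^(n-2)) (2^n + 2^(n-2) + 2^m) = - (3 ^ ((m - 2) div 2)))
      \<and> (odd n \<and> even m \<and> 2 \<le> m \<and> m + 3 \<le> n \<longrightarrow>
           delta_odd3 (2^n + 2^(n-2)) (2^n + 2^(n-2) + 2^m) = 0)
      \<and> (even n \<and> odd m \<and> 3 \<le> m \<and> m + 3 \<le> n \<longrightarrow>
           delta_odd3 (2^n + 2^(n-2)) (2^n + 2^(n-2) + 2^m) = - (2 * 3 ^ ((m - 3) div 2)))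
      \<and> (odd n \<and> odd m \<and> 3 \<le> m \<and> m + 4 \<le> n \<longrightarrow>
           delta_odd3 (2^n + 2^(n-2)) (2^n + 2^(n-2) + 2^m) = 3 ^ ((m - 3) div 2)))"
proof (intro conjI allI impI)
  fix n :: nat
  assume "n \<ge> 2"
  then show "delta_odd3 0 (2^n) = 3 ^ (n div 2 - 1)"
    using delta_odd3_initial[of n] delta_odd_res_even(1)[of n] delta_odd_res_odd(1)[of n]
    by (cases "even n") (auto elim!: oddE)
qed (auto simp del: One_nat_def
    simp: delta_odd3_pow2_block delta_odd3_five_block delta_odd_res_even delta_odd_res_odd)

end
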